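(* Let $M$ be a monoidal category which admits functorial inverses and let $f:x\to x'$ be a morphism in $M$. Then for all objects $y,z\in M$ the maps $$(-)\otimes f: M(y,z)\to M(y\otimes x, z\otimes x'),\qquad f\otimes(-): M(y,z)\to M(x\otimes y, x'\otimes z)$$ are bijections.
   Context: A monoidal category $M$ admits functorial inverses if there exist a functor $i:M\to M$ and a natural isomorphism $x\otimes i(x)\cong 1$. $M(a,b)$ denotes the set of morphisms from $a$ to $b$ in $M$. *)

theory Defs
  imports Main
begin

text \<open>Categories in the dom/cod style: a set of objects, a set of morphisms,
  domain and codomain maps, identities and composition (Cmp C g f = g after f).\<close>

record ('o, 'm) category =
  Obj :: "'o set"
  Mor :: "'m set"
  Dom :: "'m \<Rightarrow> 'o"
  Cod :: "'m \<Rightarrow> 'o"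
  Idm :: "'o \<Rightarrow> 'm"
  Cmp :: "'m \<Rightarrow> 'm \<Rightarrow> 'm"

definition hom :: "('o, 'm, 'x) category_scheme \<Rightarrow> 'o \<Rightarrow> 'o \<Rightarrow> 'm set" where
  "hom C a b = {f \<in> Mor C. Dom C f = a \<and> Cod C f = b}"

locale category =
  fixes C :: "('o, 'm, 'x) category_scheme"
  assumes dom_obj: "f \<in> Mor C \<Longrightarrow> Dom C f \<in> Obj C"
    and cod_obj: "f \<in> Mor C \<Longrightarrow> Cod C f \<in> Obj C"
    and id_hom: "a \<in> Obj C \<Longrightarrow> Idm C a \<in> hom C a a"
    and comp_hom: "\<lbrakk>f \<in> hom C a b; g \<in> hom C b c\<rbrakk> \<Longrightarrow> Cmp C g f \<in> hom C a c"
    and id_left: "f \<in> hom C a b \<Longrightarrow> Cmp C (Idm C b) f = f"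
    and id_right: "f \<in> hom C a b \<Longrightarrow> Cmp C f (Idm C a) = f"
    and comp_assoc: "\<lbrakk>f \<in> hom C a b; g \<in> hom C b c; h \<in> hom C c d\<rbrakk>
       \<Longrightarrow> Cmp C h (Cmp C g f) = Cmp C (Cmp C h g) f"

definition iso_betw :: "('o, 'm, 'x) category_scheme \<Rightarrow> 'm \<Rightarrow> 'o \<Rightarrow> 'o \<Rightarrow> bool" where
  "iso_betw C f a b \<longleftrightarrow> f \<in> hom C a b \<and>
     (\<exists>g \<in> hom C b a. Cmp C g f = Idm C a \<and> Cmp C f g = Idm C b)"

locale monoidal_category = category C
  for C :: "('o, 'm, 'x) category_scheme" +
  fixes T :: "'o \<Rightarrow> 'o \<Rightarrow> 'o"
    and Tm :: "'m \<Rightarrow> 'm \<Rightarrow> 'm"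
    and U :: "'o"
    and Al :: "'o \<Rightarrow> 'o \<Rightarrow> 'o \<Rightarrow> 'm"
    and Lu :: "'o \<Rightarrow> 'm"
    and Ru :: "'o \<Rightarrow> 'm"
  assumes unit_obj: "U \<in> Obj C"
    and T_obj: "\<lbrakk>a \<in> Obj C; b \<in> Obj C\<rbrakk> \<Longrightarrow> T a b \<in> Obj C"
    and Tm_hom: "\<lbrakk>f \<in> hom C a a'; g \<in> hom C b b'\<rbrakk> \<Longrightarrow> Tm f g \<in> hom C (T a b) (T a' b')"
    and Tm_id: "\<lbrakk>a \<in> Obj C; b \<in> Obj C\<rbrakk> \<Longrightarrow> Tm (Idm C a) (Idm C b) = Idm C (T a b)"
    and Tm_comp: "\<lbrakk>f \<in> hom C a b; f' \<in> hom C b c; g \<in> hom C a' b'; g' \<in> hom C b' c'\<rbrakk>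
       \<Longrightarrow> Tm (Cmp C f' f) (Cmp C g' g) = Cmp C (Tm f' g') (Tm f g)"
    and Al_iso: "\<lbrakk>a \<in> Obj C; b \<in> Obj C; c \<in> Obj C\<rbrakk>
       \<Longrightarrow> iso_betw C (Al a b c) (T (T a b) c) (T a (T b c))"
    and Al_nat: "\<lbrakk>f \<in> hom C a a'; g \<in> hom C b b'; h \<in> hom C c c'\<rbrakk>
       \<Longrightarrow> Cmp C (Al a' b' c') (Tm (Tm f g) h) = Cmp C (Tm f (Tm g h)) (Al a b c)"
    and Lu_iso: "a \<in> Obj C \<Longrightarrow> iso_betw C (Lu a) (T U a) a"
    and Lu_nat: "f \<in> hom C a a' \<Longrightarrow> Cmp C f (Lu a) = Cmp C (Lu a') (Tm (Idm C U) f)"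
    and Ru_iso: "a \<in> Obj C \<Longrightarrow> iso_betw C (Ru a) (T a U) a"
    and Ru_nat: "f \<in> hom C a a' \<Longrightarrow> Cmp C f (Ru a) = Cmp C (Ru a') (Tm f (Idm C U))"
    and pentagon: "\<lbrakk>a \<in> Obj C; b \<in> Obj C; c \<in> Obj C; d \<in> Obj C\<rbrakk> \<Longrightarrow>
       Cmp C (Tm (Idm C a) (Al b c d)) (Cmp C (Al a (T b c) d) (Tm (Al a b c) (Idm C d)))
       = Cmp C (Al a b (T c d)) (Al (T a b) c d)"
    and triangle: "\<lbrakk>a \<in> Obj C; b \<in> Obj C\<rbrakk> \<Longrightarrow>
       Cmp C (Tm (Idm C a) (Lu b)) (Al a U b) = Tm (Ru a) (Idm C b)"

definition endofunctor :: "('o, 'm, 'x) category_scheme \<Rightarrow> ('o \<Rightarrow> 'o) \<Rightarrow> ('m \<Rightarrow> 'm) \<Rightarrow> bool" where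
  "endofunctor C Fo Fm \<longleftrightarrow>
     (\<forall>a \<in> Obj C. Fo a \<in> Obj C) \<and>
     (\<forall>a b f. f \<in> hom C a b \<longrightarrow> Fm f \<in> hom C (Fo a) (Fo b)) \<and>
     (\<forall>a \<in> Obj C. Fm (Idm C a) = Idm C (Fo a)) \<and>
     (\<forall>a b c f g. f \<in> hom C a b \<longrightarrow> g \<in> hom C b c \<longrightarrow> Fm (Cmp C g f) = Cmp C (Fm g) (Fm f))"

text \<open>Functorial inverses: a functor i and a natural isomorphism
  eta x : x \<otimes> i(x) \<rightarrow> 1 (natural transformation from x \<mapsto> x \<otimes> i(x) to the constant functor 1).\<close>

definition admits_functorial_inverses ::
  "('o, 'm, 'x) category_scheme \<Rightarrow> ('o \<Rightarrow> 'o \<Rightarrow> 'o) \<Rightarrow> ('m \<Rightarrow> 'm \<Rightarrow> 'm) \<Rightarrow> 'o \<Rightarrow> bool" where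
  "admits_functorial_inverses C T Tm U \<longleftrightarrow>
     (\<exists>io im eta. endofunctor C io im \<and>
        (\<forall>x \<in> Obj C. iso_betw C (eta x) (T x (io x)) U) \<and>
        (\<forall>x x' f. f \<in> hom C x x' \<longrightarrow>
            Cmp C (eta x') (Tm f (im f)) = Cmp C (Idm C U) (eta x)))"

end

theory Submission
  imports Defs
begin

text \<open>If b is a two-sided tensor inverse of a, the associator, the isomorphism a \<otimes> b \<cong> 1 and
  a unitor make (-) \<otimes> a \<otimes> b naturally isomorphic to the identity, so it is fully faithful;
  together with the same fact for (-) \<otimes> b \<otimes> a this makes (-) \<otimes> a fully faithful, and
  likewise a \<otimes> (-). Functorial inverses give such two-sided inverses, and naturality of
  x \<otimes> i(x) \<cong> 1 shows that every morphism f is invertible. Finally g \<otimes> f = (1 \<otimes> f) \<circ> (g \<otimes> 1)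
  is the composite of the bijection g \<mapsto> g \<otimes> 1 with composition by the isomorphism 1 \<otimes> f.\<close>

definition isomorphic :: "('o, 'm, 'x) category_scheme \<Rightarrow> 'o \<Rightarrow> 'o \<Rightarrow> bool" where
  "isomorphic C a b \<longleftrightarrow> (\<exists>e. iso_betw C e a b)"

definition natural_iso ::
  "('o, 'm, 'x) category_scheme \<Rightarrow> ('o \<Rightarrow> 'o) \<Rightarrow> ('m \<Rightarrow> 'm) \<Rightarrow> ('o \<Rightarrow> 'o) \<Rightarrow> ('m \<Rightarrow> 'm)
    \<Rightarrow> ('o \<Rightarrow> 'm) \<Rightarrow> bool" where
  "natural_iso C Fo Fm Go Gm \<theta> \<longleftrightarrow>
     (\<forall>y \<in> Obj C. iso_betw C (\<theta> y) (Fo y) (Go y)) \<and>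
     (\<forall>y z g. g \<in> hom C y z \<longrightarrow> Cmp C (\<theta> z) (Fm g) = Cmp C (Gm g) (\<theta> y))"

definition faithful :: "('o, 'm, 'x) category_scheme \<Rightarrow> ('m \<Rightarrow> 'm) \<Rightarrow> bool" where
  "faithful C Fm \<longleftrightarrow> (\<forall>y z. inj_on Fm (hom C y z))"

definition fully_faithful :: "('o, 'm, 'x) category_scheme \<Rightarrow> ('o \<Rightarrow> 'o) \<Rightarrow> ('m \<Rightarrow> 'm) \<Rightarrow> bool" where
  "fully_faithful C Fo Fm \<longleftrightarrow>
     (\<forall>y \<in> Obj C. \<forall>z \<in> Obj C. bij_betw Fm (hom C y z) (hom C (Fo y) (Fo z)))"

lemma natural_iso_iso_betw:
  "natural_iso C Fo Fm Go Gm \<theta> \<Longrightarrow> y \<in> Obj C \<Longrightarrow> iso_betw C (\<theta> y) (Fo y) (Go y)"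
  unfolding natural_iso_def by blast

lemma natural_iso_naturality:
  "natural_iso C Fo Fm Go Gm \<theta> \<Longrightarrow> g \<in> hom C y z \<Longrightarrow> Cmp C (\<theta> z) (Fm g) = Cmp C (Gm g) (\<theta> y)"
  unfolding natural_iso_def by blast

lemma endofunctor_hom: "endofunctor C Fo Fm \<Longrightarrow> f \<in> hom C a b \<Longrightarrow> Fm f \<in> hom C (Fo a) (Fo b)"
  unfolding endofunctor_def by blast

lemma endofunctor_Obj: "endofunctor C Fo Fm \<Longrightarrow> a \<in> Obj C \<Longrightarrow> Fo a \<in> Obj C"
  unfolding endofunctor_def by blast

lemma endofunctor_comp:
  "endofunctor C Fo Fm \<Longrightarrow> endofunctor C Go Gm \<Longrightarrow> endofunctor C (\<lambda>y. Go (Fo y)) (\<lambda>g. Gm (Fm g))"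
  unfolding endofunctor_def by (simp, meson)

context category
begin

lemma hom_Obj: "f \<in> hom C a b \<Longrightarrow> a \<in> Obj C \<and> b \<in> Obj C"
  using dom_obj cod_obj by (auto simp: hom_def)

lemma endofunctor_id: "endofunctor C (\<lambda>y. y) (\<lambda>g. g)"
  unfolding endofunctor_def by auto

lemma iso_betw_hom: "iso_betw C f a b \<Longrightarrow> f \<in> hom C a b"
  by (simp add: iso_betw_def)

lemma iso_betw_id: "a \<in> Obj C \<Longrightarrow> iso_betw C (Idm C a) a a"
  unfolding iso_betw_def using id_hom id_left by blast

lemma iso_betw_inverse:
  assumes "iso_betw C f a b"
  obtains g where "iso_betw C g b a" "Cmp C g f = Idm C a" "Cmp C f g = Idm C b"
  using assms unfolding iso_betw_def by blast

lemma iso_betw_comp: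
  assumes f: "iso_betw C f a b" and g: "iso_betw C g b c"
  shows "iso_betw C (Cmp C g f) a c"
proof -
  obtain f' where f': "f' \<in> hom C b a" "Cmp C f' f = Idm C a" "Cmp C f f' = Idm C b"
    and fh: "f \<in> hom C a b"
    using f unfolding iso_betw_def by blast
  obtain g' where g': "g' \<in> hom C c b" "Cmp C g' g = Idm C b" "Cmp C g g' = Idm C c"
    and gh: "g \<in> hom C b c"
    using g unfolding iso_betw_def by blast
  have "Cmp C (Cmp C f' g') (Cmp C g f) = Cmp C f' (Cmp C g' (Cmp C g f))"
    using comp_assoc[OF comp_hom[OF fh gh] g'(1) f'(1)] by simp
  also have "\<dots> = Cmp C f' (Cmp C (Cmp C g' g) f)"
    using comp_assoc[OF fh gh g'(1)] by simp
  also have "\<dots> = Idm C a" using f' g' id_left[OF fh] by simp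
  finally have left: "Cmp C (Cmp C f' g') (Cmp C g f) = Idm C a" .
  have "Cmp C (Cmp C g f) (Cmp C f' g') = Cmp C g (Cmp C f (Cmp C f' g'))"
    using comp_assoc[OF comp_hom[OF g'(1) f'(1)] fh gh] by simp
  also have "\<dots> = Cmp C g (Cmp C (Cmp C f f') g')"
    using comp_assoc[OF g'(1) f'(1) fh] by simp
  also have "\<dots> = Idm C c" using f' g' id_left[OF g'(1)] by simp
  finally have right: "Cmp C (Cmp C g f) (Cmp C f' g') = Idm C c" .
  show ?thesis
    unfolding iso_betw_def using left right comp_hom fh gh f'(1) g'(1) by blast
qed

lemma isomorphic_refl: "a \<in> Obj C \<Longrightarrow> isomorphic C a a"
  unfolding isomorphic_def using iso_betw_id by blast

lemma isomorphic_sym: "isomorphic C a b \<Longrightarrow> isomorphic C b a"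
  unfolding isomorphic_def by (metis iso_betw_inverse)

lemma isomorphic_trans [trans]: "isomorphic C a b \<Longrightarrow> isomorphic C b c \<Longrightarrow> isomorphic C a c"
  unfolding isomorphic_def using iso_betw_comp by blast

lemma bij_betw_postcomp_iso:
  assumes "iso_betw C t b b'"
  shows "bij_betw (Cmp C t) (hom C a b) (hom C a b')"
proof -
  obtain s where s: "iso_betw C s b' b" "Cmp C s t = Idm C b" "Cmp C t s = Idm C b'"
    using assms by (rule iso_betw_inverse)
  have t: "t \<in> hom C b b'" and s': "s \<in> hom C b' b"
    using assms s(1) by (auto dest: iso_betw_hom)
  show ?thesis
  proof (rule bij_betw_byWitness[where f' = "Cmp C s"])
    show "\<forall>h \<in> hom C a b. Cmp C s (Cmp C t h) = h"
      using comp_assoc[OF _ t s'] s(2) id_left by simp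
    show "\<forall>h \<in> hom C a b'. Cmp C t (Cmp C s h) = h"
      using comp_assoc[OF _ s' t] s(3) id_left by simp
  qed (use t s' comp_hom in blast)+
qed

lemma bij_betw_precomp_iso:
  assumes "iso_betw C t a' a"
  shows "bij_betw (\<lambda>h. Cmp C h t) (hom C a b) (hom C a' b)"
proof -
  obtain s where s: "iso_betw C s a a'" "Cmp C s t = Idm C a'" "Cmp C t s = Idm C a"
    using assms by (rule iso_betw_inverse)
  have t: "t \<in> hom C a' a" and s': "s \<in> hom C a a'"
    using assms s(1) by (auto dest: iso_betw_hom)
  show ?thesis
  proof (rule bij_betw_byWitness[where f' = "\<lambda>h. Cmp C h s"])
    show "\<forall>h \<in> hom C a b. Cmp C (Cmp C h t) s = h"
      using comp_assoc[OF s' t] s(3) id_right by simp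
    show "\<forall>h \<in> hom C a' b. Cmp C (Cmp C h s) t = h"
      using comp_assoc[OF t s'] s(2) id_right by simp
  qed (use t s' comp_hom in blast)+
qed

lemma natural_iso_comp:
  assumes F: "endofunctor C Fo Fm" and G: "endofunctor C Go Gm" and H: "endofunctor C Ho Hm"
    and \<theta>: "natural_iso C Fo Fm Go Gm \<theta>" and \<phi>: "natural_iso C Go Gm Ho Hm \<phi>"
  shows "natural_iso C Fo Fm Ho Hm (\<lambda>y. Cmp C (\<phi> y) (\<theta> y))"
  unfolding natural_iso_def
proof (intro conjI allI ballI impI)
  fix y assume "y \<in> Obj C"
  then show "iso_betw C (Cmp C (\<phi> y) (\<theta> y)) (Fo y) (Ho y)"
    using iso_betw_comp natural_iso_iso_betw[OF \<theta>] natural_iso_iso_betw[OF \<phi>] by blast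
next
  fix y z g assume g: "g \<in> hom C y z"
  then have y: "y \<in> Obj C" and z: "z \<in> Obj C" by (auto dest: hom_Obj)
  note \<theta>y = iso_betw_hom[OF natural_iso_iso_betw[OF \<theta> y]]
    and \<theta>z = iso_betw_hom[OF natural_iso_iso_betw[OF \<theta> z]]
    and \<phi>y = iso_betw_hom[OF natural_iso_iso_betw[OF \<phi> y]]
    and \<phi>z = iso_betw_hom[OF natural_iso_iso_betw[OF \<phi> z]]
  note Fg = endofunctor_hom[OF F g] and Gg = endofunctor_hom[OF G g]
    and Hg = endofunctor_hom[OF H g]
  have "Cmp C (Cmp C (\<phi> z) (\<theta> z)) (Fm g) = Cmp C (\<phi> z) (Cmp C (\<theta> z) (Fm g))"
    using comp_assoc[OF Fg \<theta>z \<phi>z] by simp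
  also have "\<dots> = Cmp C (\<phi> z) (Cmp C (Gm g) (\<theta> y))"
    using natural_iso_naturality[OF \<theta> g] by simp
  also have "\<dots> = Cmp C (Cmp C (\<phi> z) (Gm g)) (\<theta> y)"
    using comp_assoc[OF \<theta>y Gg \<phi>z] .
  also have "\<dots> = Cmp C (Cmp C (Hm g) (\<phi> y)) (\<theta> y)"
    using natural_iso_naturality[OF \<phi> g] by simp
  also have "\<dots> = Cmp C (Hm g) (Cmp C (\<phi> y) (\<theta> y))"
    using comp_assoc[OF \<theta>y \<phi>y Hg] by simp
  finally show "Cmp C (Cmp C (\<phi> z) (\<theta> z)) (Fm g) = Cmp C (Hm g) (Cmp C (\<phi> y) (\<theta> y))" .
qed

lemma natural_iso_inverse:
  assumes F: "endofunctor C Fo Fm" and G: "endofunctor C Go Gm"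
    and \<theta>: "natural_iso C Fo Fm Go Gm \<theta>"
  obtains \<theta>' where "natural_iso C Go Gm Fo Fm \<theta>'"
proof
  define \<theta>' where "\<theta>' y = (SOME s. iso_betw C s (Go y) (Fo y) \<and>
      Cmp C s (\<theta> y) = Idm C (Fo y) \<and> Cmp C (\<theta> y) s = Idm C (Go y))" for y
  have inverse: "iso_betw C (\<theta>' y) (Go y) (Fo y) \<and>
      Cmp C (\<theta>' y) (\<theta> y) = Idm C (Fo y) \<and> Cmp C (\<theta> y) (\<theta>' y) = Idm C (Go y)"
    if "y \<in> Obj C" for y
  proof -
    from natural_iso_iso_betw[OF \<theta> that] obtain s where "iso_betw C s (Go y) (Fo y)"
      "Cmp C s (\<theta> y) = Idm C (Fo y)" "Cmp C (\<theta> y) s = Idm C (Go y)"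
      by (rule iso_betw_inverse)
    then have "\<exists>s. iso_betw C s (Go y) (Fo y) \<and>
        Cmp C s (\<theta> y) = Idm C (Fo y) \<and> Cmp C (\<theta> y) s = Idm C (Go y)"
      by blast
    then show ?thesis
      unfolding \<theta>'_def by (rule someI_ex)
  qed
  show "natural_iso C Go Gm Fo Fm \<theta>'"
    unfolding natural_iso_def
  proof (intro conjI allI ballI impI)
    fix y assume "y \<in> Obj C"
    then show "iso_betw C (\<theta>' y) (Go y) (Fo y)" using inverse by blast
  next
    fix y z g assume g: "g \<in> hom C y z"
    then have y: "y \<in> Obj C" and z: "z \<in> Obj C" by (auto dest: hom_Obj)
    note \<theta>y = iso_betw_hom[OF natural_iso_iso_betw[OF \<theta> y]]
      and \<theta>z = iso_betw_hom[OF natural_iso_iso_betw[OF \<theta> z]]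
    have \<theta>'y: "\<theta>' y \<in> hom C (Go y) (Fo y)" and \<theta>'z: "\<theta>' z \<in> hom C (Go z) (Fo z)"
      using inverse y z iso_betw_hom by blast+
    note Fg = endofunctor_hom[OF F g] and Gg = endofunctor_hom[OF G g]
    have "Cmp C (\<theta>' z) (Gm g) = Cmp C (\<theta>' z) (Cmp C (Gm g) (Cmp C (\<theta> y) (\<theta>' y)))"
      using inverse[OF y] id_right[OF Gg] by simp
    also have "\<dots> = Cmp C (\<theta>' z) (Cmp C (Cmp C (\<theta> z) (Fm g)) (\<theta>' y))"
      using comp_assoc[OF \<theta>'y \<theta>y Gg] natural_iso_naturality[OF \<theta> g] by simp
    also have "\<dots> = Cmp C (Cmp C (\<theta>' z) (\<theta> z)) (Cmp C (Fm g) (\<theta>' y))"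
      using comp_assoc[OF \<theta>'y Fg \<theta>z] comp_assoc[OF comp_hom[OF \<theta>'y Fg] \<theta>z \<theta>'z] by simp
    also have "\<dots> = Cmp C (Fm g) (\<theta>' y)"
      using inverse[OF z] id_left comp_hom[OF \<theta>'y Fg] by simp
    finally show "Cmp C (\<theta>' z) (Gm g) = Cmp C (Fm g) (\<theta>' y)" .
  qed
qed

text \<open>A functor naturally isomorphic to the identity acts on each hom-set as conjugation by
  the components of the isomorphism.\<close>

lemma natural_iso_id_fully_faithful:
  assumes F: "endofunctor C Fo Fm" and \<theta>: "natural_iso C Fo Fm (\<lambda>y. y) (\<lambda>g. g) \<theta>"
  shows "fully_faithful C Fo Fm"
  unfolding fully_faithful_def
proof (intro ballI)
  fix y z assume "y \<in> Obj C" "z \<in> Obj C"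
  then have \<theta>y: "iso_betw C (\<theta> y) (Fo y) y" and \<theta>z: "iso_betw C (\<theta> z) (Fo z) z"
    using natural_iso_iso_betw[OF \<theta>] by simp_all
  have "(Cmp C (\<theta> z) \<circ> Fm) g = Cmp C g (\<theta> y)" if "g \<in> hom C y z" for g
    using natural_iso_naturality[OF \<theta> that] by simp
  then have "bij_betw (Cmp C (\<theta> z) \<circ> Fm) (hom C y z) (hom C (Fo y) z)
      = bij_betw (\<lambda>g. Cmp C g (\<theta> y)) (hom C y z) (hom C (Fo y) z)"
    by (rule bij_betw_cong)
  then have "bij_betw (Cmp C (\<theta> z) \<circ> Fm) (hom C y z) (hom C (Fo y) z)"
    using bij_betw_precomp_iso[OF \<theta>y] by simp
  moreover have F_img: "Fm ` hom C y z \<subseteq> hom C (Fo y) (Fo z)"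
    using endofunctor_hom[OF F] by blast
  ultimately show "bij_betw Fm (hom C y z) (hom C (Fo y) (Fo z))"
    using bij_betw_comp_iff2[OF bij_betw_postcomp_iso[OF \<theta>z] F_img] by simp
qed

lemma fully_faithful_comp_imp_faithful:
  assumes "fully_faithful C (\<lambda>y. Go (Fo y)) (\<lambda>g. Gm (Fm g))"
  shows "faithful C Fm"
  unfolding faithful_def
proof (intro allI)
  fix y z
  show "inj_on Fm (hom C y z)"
  proof (cases "y \<in> Obj C \<and> z \<in> Obj C")
    case True
    then have "inj_on (Gm \<circ> Fm) (hom C y z)"
      using assms unfolding fully_faithful_def bij_betw_def comp_def by blast
    then show ?thesis by (rule inj_on_imageI2)
  next
    case False
    then have "hom C y z = {}" using hom_Obj by blast
    then show ?thesis by simp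
  qed
qed

lemma fully_faithful_comp_cancel:
  assumes F: "endofunctor C Fo Fm" and G: "endofunctor C Go Gm" and "faithful C Gm"
    and GF: "fully_faithful C (\<lambda>y. Go (Fo y)) (\<lambda>g. Gm (Fm g))"
  shows "fully_faithful C Fo Fm"
  unfolding fully_faithful_def
proof (intro ballI)
  fix y z assume "y \<in> Obj C" "z \<in> Obj C"
  then have GF_bij: "bij_betw (Gm \<circ> Fm) (hom C y z) (hom C (Go (Fo y)) (Go (Fo z)))"
    using GF unfolding fully_faithful_def comp_def by blast
  have F_img: "Fm ` hom C y z \<subseteq> hom C (Fo y) (Fo z)"
    using endofunctor_hom[OF F] by blast
  have "Gm ` hom C (Fo y) (Fo z) = hom C (Go (Fo y)) (Go (Fo z))"
  proof
    show "Gm ` hom C (Fo y) (Fo z) \<subseteq> hom C (Go (Fo y)) (Go (Fo z))"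
      using endofunctor_hom[OF G] by blast
    have "hom C (Go (Fo y)) (Go (Fo z)) = Gm ` Fm ` hom C y z"
      using bij_betw_imp_surj_on[OF GF_bij] by (simp add: image_comp)
    then show "hom C (Go (Fo y)) (Go (Fo z)) \<subseteq> Gm ` hom C (Fo y) (Fo z)"
      using image_mono[OF F_img] by simp
  qed
  moreover have "inj_on Gm (hom C (Fo y) (Fo z))"
    using \<open>faithful C Gm\<close> unfolding faithful_def by blast
  ultimately have G_bij: "bij_betw Gm (hom C (Fo y) (Fo z)) (hom C (Go (Fo y)) (Go (Fo z)))"
    unfolding bij_betw_def by blast
  show "bij_betw Fm (hom C y z) (hom C (Fo y) (Fo z))"
    using bij_betw_comp_iff2[OF G_bij F_img] GF_bij by simp
qed

lemma fully_faithful_reflects_retraction: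
  assumes F: "endofunctor C Fo Fm" and ff: "fully_faithful C Fo Fm" and f: "f \<in> hom C a b"
    and r: "r \<in> hom C (Fo b) (Fo a)" and rf: "Cmp C r (Fm f) = Idm C (Fo a)"
  obtains s where "s \<in> hom C b a" "Cmp C s f = Idm C a"
proof -
  have a: "a \<in> Obj C" and b: "b \<in> Obj C" using hom_Obj[OF f] by auto
  then obtain s where s: "s \<in> hom C b a" "Fm s = r"
    using ff r unfolding fully_faithful_def bij_betw_def by (metis imageE)
  have "Fm (Cmp C s f) = Fm (Idm C a)"
    using F f s a rf unfolding endofunctor_def by metis
  then have "Cmp C s f = Idm C a"
    using ff a comp_hom[OF f s(1)] id_hom[OF a]
    unfolding fully_faithful_def bij_betw_def inj_on_def by blast
  then show thesis using that s(1) by blast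
qed

lemma fully_faithful_reflects_section:
  assumes F: "endofunctor C Fo Fm" and ff: "fully_faithful C Fo Fm" and f: "f \<in> hom C a b"
    and r: "r \<in> hom C (Fo b) (Fo a)" and fr: "Cmp C (Fm f) r = Idm C (Fo b)"
  obtains s where "s \<in> hom C b a" "Cmp C f s = Idm C b"
proof -
  have a: "a \<in> Obj C" and b: "b \<in> Obj C" using hom_Obj[OF f] by auto
  then obtain s where s: "s \<in> hom C b a" "Fm s = r"
    using ff r unfolding fully_faithful_def bij_betw_def by (metis imageE)
  have "Fm (Cmp C f s) = Fm (Idm C b)"
    using F f s b fr unfolding endofunctor_def by metis
  then have "Cmp C f s = Idm C b"
    using ff b comp_hom[OF s(1) f] id_hom[OF b]
    unfolding fully_faithful_def bij_betw_def inj_on_def by blast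
  then show thesis using that s(1) by blast
qed

lemma iso_betw_if_section_retraction:
  assumes f: "f \<in> hom C a b" and s: "s \<in> hom C b a" "Cmp C f s = Idm C b"
    and r: "r \<in> hom C b a" "Cmp C r f = Idm C a"
  shows "iso_betw C f a b"
proof -
  have "r = Cmp C r (Cmp C f s)" using s(2) id_right[OF r(1)] by simp
  also have "\<dots> = Cmp C (Cmp C r f) s" using comp_assoc[OF s(1) f r(1)] .
  also have "\<dots> = s" using r(2) id_left[OF s(1)] by simp
  finally show ?thesis unfolding iso_betw_def using f s r by blast
qed

lemma iso_betw_comp_split:
  assumes pq: "iso_betw C (Cmp C p q) a c" and q: "q \<in> hom C a b" and p: "p \<in> hom C b c"
  shows "\<exists>s \<in> hom C c b. Cmp C p s = Idm C c" and "\<exists>r \<in> hom C b a. Cmp C r q = Idm C a"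
proof -
  obtain k where k: "iso_betw C k c a" "Cmp C k (Cmp C p q) = Idm C a" "Cmp C (Cmp C p q) k = Idm C c"
    using pq by (rule iso_betw_inverse)
  have kh: "k \<in> hom C c a" using k(1) by (rule iso_betw_hom)
  have "Cmp C p (Cmp C q k) = Idm C c" using comp_assoc[OF kh q p] k(3) by simp
  then show "\<exists>s \<in> hom C c b. Cmp C p s = Idm C c" using comp_hom[OF kh q] by blast
  have "Cmp C (Cmp C k p) q = Idm C a" using comp_assoc[OF q p kh] k(2) by simp
  then show "\<exists>r \<in> hom C b a. Cmp C r q = Idm C a" using comp_hom[OF p kh] by blast
qed

lemma iso_betw_comp_cancel_left:
  assumes t: "iso_betw C t b c" and k: "k \<in> hom C a b" and tk: "iso_betw C (Cmp C t k) a c"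
  shows "iso_betw C k a b"
proof -
  obtain s where s: "iso_betw C s c b" "Cmp C s t = Idm C b"
    using t by (rule iso_betw_inverse)
  have "k = Cmp C (Cmp C s t) k" using s(2) id_left[OF k] by simp
  also have "\<dots> = Cmp C s (Cmp C t k)"
    using comp_assoc[OF k iso_betw_hom[OF t] iso_betw_hom[OF s(1)]] by simp
  finally show ?thesis using iso_betw_comp[OF tk s(1)] by simp
qed

end

context monoidal_category
begin

lemma endofunctor_tensor_right: "a \<in> Obj C \<Longrightarrow> endofunctor C (\<lambda>y. T y a) (\<lambda>g. Tm g (Idm C a))"
  unfolding endofunctor_def
  using T_obj Tm_hom Tm_id id_hom Tm_comp[OF _ _ id_hom id_hom] id_left[OF id_hom] by metis

lemma endofunctor_tensor_left: "a \<in> Obj C \<Longrightarrow> endofunctor C (\<lambda>y. T a y) (\<lambda>g. Tm (Idm C a) g)"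
  unfolding endofunctor_def
  using T_obj Tm_hom Tm_id id_hom Tm_comp[OF id_hom id_hom] id_left[OF id_hom] by metis

lemma Tm_as_comp_fst_first:
  assumes f: "f \<in> hom C a a'" and g: "g \<in> hom C b b'"
  shows "Tm f g = Cmp C (Tm (Idm C a') g) (Tm f (Idm C b))"
proof -
  have "a' \<in> Obj C" "b \<in> Obj C" using hom_Obj f g by auto
  then show ?thesis using Tm_comp[OF f id_hom id_hom g] id_left[OF f] id_right[OF g] by simp
qed

lemma Tm_as_comp_snd_first:
  assumes f: "f \<in> hom C a a'" and g: "g \<in> hom C b b'"
  shows "Tm f g = Cmp C (Tm f (Idm C b')) (Tm (Idm C a) g)"
proof -
  have "a \<in> Obj C" "b' \<in> Obj C" using hom_Obj f g by auto
  then show ?thesis using Tm_comp[OF id_hom f g id_hom] id_left[OF g] id_right[OF f] by simp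
qed

lemma iso_betw_Tm:
  assumes f: "iso_betw C f a a'" and g: "iso_betw C g b b'"
  shows "iso_betw C (Tm f g) (T a b) (T a' b')"
proof -
  obtain f' where f': "iso_betw C f' a' a" "Cmp C f' f = Idm C a" "Cmp C f f' = Idm C a'"
    using f by (rule iso_betw_inverse)
  obtain g' where g': "iso_betw C g' b' b" "Cmp C g' g = Idm C b" "Cmp C g g' = Idm C b'"
    using g by (rule iso_betw_inverse)
  note fh = iso_betw_hom[OF f] and gh = iso_betw_hom[OF g]
    and f'h = iso_betw_hom[OF f'(1)] and g'h = iso_betw_hom[OF g'(1)]
  have "a \<in> Obj C" "a' \<in> Obj C" "b \<in> Obj C" "b' \<in> Obj C" using hom_Obj fh gh by auto
  then have "Cmp C (Tm f' g') (Tm f g) = Idm C (T a b)"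
    and "Cmp C (Tm f g) (Tm f' g') = Idm C (T a' b')"
    using Tm_comp[OF fh f'h gh g'h] Tm_comp[OF f'h fh g'h gh] f' g' Tm_id by simp_all
  then show ?thesis
    unfolding iso_betw_def using Tm_hom[OF fh gh] Tm_hom[OF f'h g'h] by blast
qed

lemma isomorphic_T: "isomorphic C a a' \<Longrightarrow> isomorphic C b b' \<Longrightarrow> isomorphic C (T a b) (T a' b')"
  unfolding isomorphic_def using iso_betw_Tm by blast

lemma natural_iso_assoc_right:
  assumes a: "a \<in> Obj C" and b: "b \<in> Obj C"
  shows "natural_iso C (\<lambda>y. T (T y a) b) (\<lambda>g. Tm (Tm g (Idm C a)) (Idm C b))
    (\<lambda>y. T y (T a b)) (\<lambda>g. Tm g (Idm C (T a b))) (\<lambda>y. Al y a b)"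
  unfolding natural_iso_def
  using Al_iso[OF _ a b] Al_nat[OF _ id_hom[OF a] id_hom[OF b]] Tm_id[OF a b] by simp

lemma natural_iso_assoc_left:
  assumes a: "a \<in> Obj C" and b: "b \<in> Obj C"
  shows "natural_iso C (\<lambda>y. T (T a b) y) (\<lambda>g. Tm (Idm C (T a b)) g)
    (\<lambda>y. T a (T b y)) (\<lambda>g. Tm (Idm C a) (Tm (Idm C b) g)) (Al a b)"
  unfolding natural_iso_def
  using Al_iso[OF a b] Al_nat[OF id_hom[OF a] id_hom[OF b]] Tm_id[OF a b] by simp

lemma natural_iso_tensor_right_iso:
  assumes e: "iso_betw C e c d"
  shows "natural_iso C (\<lambda>y. T y c) (\<lambda>g. Tm g (Idm C c)) (\<lambda>y. T y d) (\<lambda>g. Tm g (Idm C d))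
    (\<lambda>y. Tm (Idm C y) e)"
  unfolding natural_iso_def
  using iso_betw_Tm[OF iso_betw_id e] Tm_as_comp_fst_first[OF _ iso_betw_hom[OF e]]
    Tm_as_comp_snd_first[OF _ iso_betw_hom[OF e]] by metis

lemma natural_iso_tensor_left_iso:
  assumes e: "iso_betw C e c d"
  shows "natural_iso C (\<lambda>y. T c y) (\<lambda>g. Tm (Idm C c) g) (\<lambda>y. T d y) (\<lambda>g. Tm (Idm C d) g)
    (\<lambda>y. Tm e (Idm C y))"
  unfolding natural_iso_def
  using iso_betw_Tm[OF e iso_betw_id] Tm_as_comp_fst_first[OF iso_betw_hom[OF e]]
    Tm_as_comp_snd_first[OF iso_betw_hom[OF e]] by metis

lemma natural_iso_right_unitor:
  "natural_iso C (\<lambda>y. T y U) (\<lambda>g. Tm g (Idm C U)) (\<lambda>y. y) (\<lambda>g. g) Ru"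
  unfolding natural_iso_def using Ru_iso Ru_nat by simp

lemma natural_iso_left_unitor:
  "natural_iso C (\<lambda>y. T U y) (\<lambda>g. Tm (Idm C U) g) (\<lambda>y. y) (\<lambda>g. g) Lu"
  unfolding natural_iso_def using Lu_iso Lu_nat by simp

lemma fully_faithful_tensor_right_right:
  assumes a: "a \<in> Obj C" and b: "b \<in> Obj C" and "isomorphic C (T a b) U"
  shows "fully_faithful C (\<lambda>y. T (T y a) b) (\<lambda>g. Tm (Tm g (Idm C a)) (Idm C b))"
proof -
  obtain e where e: "iso_betw C e (T a b) U" using assms(3) unfolding isomorphic_def by blast
  note R = endofunctor_tensor_right
  have RR: "endofunctor C (\<lambda>y. T (T y a) b) (\<lambda>g. Tm (Tm g (Idm C a)) (Idm C b))"
    using endofunctor_comp[OF R[OF a] R[OF b]] .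
  have "natural_iso C (\<lambda>y. T (T y a) b) (\<lambda>g. Tm (Tm g (Idm C a)) (Idm C b))
      (\<lambda>y. T y U) (\<lambda>g. Tm g (Idm C U)) (\<lambda>y. Cmp C (Tm (Idm C y) e) (Al y a b))"
    using natural_iso_comp[OF RR R[OF T_obj[OF a b]] R[OF unit_obj]
        natural_iso_assoc_right[OF a b] natural_iso_tensor_right_iso[OF e]] .
  from natural_iso_comp[OF RR R[OF unit_obj] endofunctor_id this natural_iso_right_unitor]
  show ?thesis by (rule natural_iso_id_fully_faithful[OF RR])
qed

lemma fully_faithful_tensor_left_left:
  assumes c: "c \<in> Obj C" and a: "a \<in> Obj C" and "isomorphic C (T c a) U"
  shows "fully_faithful C (\<lambda>y. T c (T a y)) (\<lambda>g. Tm (Idm C c) (Tm (Idm C a) g))"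
proof -
  obtain e where e: "iso_betw C e (T c a) U" using assms(3) unfolding isomorphic_def by blast
  note L = endofunctor_tensor_left
  have LL: "endofunctor C (\<lambda>y. T c (T a y)) (\<lambda>g. Tm (Idm C c) (Tm (Idm C a) g))"
    using endofunctor_comp[OF L[OF a] L[OF c]] .
  obtain \<alpha>' where "natural_iso C (\<lambda>y. T c (T a y)) (\<lambda>g. Tm (Idm C c) (Tm (Idm C a) g))
      (\<lambda>y. T (T c a) y) (\<lambda>g. Tm (Idm C (T c a)) g) \<alpha>'"
    using natural_iso_inverse[OF L[OF T_obj[OF c a]] LL natural_iso_assoc_left[OF c a]] .
  from natural_iso_comp[OF LL L[OF T_obj[OF c a]] L[OF unit_obj]
      this natural_iso_tensor_left_iso[OF e]]
  have "natural_iso C (\<lambda>y. T c (T a y)) (\<lambda>g. Tm (Idm C c) (Tm (Idm C a) g))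
      (\<lambda>y. T U y) (\<lambda>g. Tm (Idm C U) g) (\<lambda>y. Cmp C (Tm e (Idm C y)) (\<alpha>' y))" .
  from natural_iso_comp[OF LL L[OF unit_obj] endofunctor_id this natural_iso_left_unitor]
  show ?thesis by (rule natural_iso_id_fully_faithful[OF LL])
qed

lemma fully_faithful_tensor_right_if_inverse:
  assumes a: "a \<in> Obj C" and b: "b \<in> Obj C"
    and "isomorphic C (T a b) U" and "isomorphic C (T b a) U"
  shows "fully_faithful C (\<lambda>y. T y a) (\<lambda>g. Tm g (Idm C a))"
proof (rule fully_faithful_comp_cancel)
  show "faithful C (\<lambda>g. Tm g (Idm C b))"
    using fully_faithful_tensor_right_right[OF b a \<open>isomorphic C (T b a) U\<close>]
    by (rule fully_faithful_comp_imp_faithful[where Go = "\<lambda>y. T y a" and Gm = "\<lambda>g. Tm g (Idm C a)"])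
  show "fully_faithful C (\<lambda>y. T (T y a) b) (\<lambda>g. Tm (Tm g (Idm C a)) (Idm C b))"
    using fully_faithful_tensor_right_right[OF a b \<open>isomorphic C (T a b) U\<close>] .
qed (use endofunctor_tensor_right a b in blast)+

lemma fully_faithful_tensor_left_if_inverse:
  assumes a: "a \<in> Obj C" and b: "b \<in> Obj C"
    and "isomorphic C (T a b) U" and "isomorphic C (T b a) U"
  shows "fully_faithful C (\<lambda>y. T a y) (\<lambda>g. Tm (Idm C a) g)"
proof (rule fully_faithful_comp_cancel)
  show "faithful C (\<lambda>g. Tm (Idm C b) g)"
    using fully_faithful_tensor_left_left[OF a b \<open>isomorphic C (T a b) U\<close>]
    by (rule fully_faithful_comp_imp_faithful[where Go = "\<lambda>y. T a y" and Gm = "\<lambda>g. Tm (Idm C a) g"])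
  show "fully_faithful C (\<lambda>y. T b (T a y)) (\<lambda>g. Tm (Idm C b) (Tm (Idm C a) g))"
    using fully_faithful_tensor_left_left[OF b a \<open>isomorphic C (T b a) U\<close>] .
qed (use endofunctor_tensor_left a b in blast)+

lemma isomorphic_tensor_unit_swap:
  assumes a: "a \<in> Obj C" and b: "b \<in> Obj C" and d: "d \<in> Obj C"
    and ab: "isomorphic C (T a b) U" and bd: "isomorphic C (T b d) U"
  shows "isomorphic C (T b a) U"
proof -
  have ba: "T b a \<in> Obj C" using T_obj a b by simp
  have assoc: "isomorphic C (T (T x y) z) (T x (T y z))"
    if "x \<in> Obj C" "y \<in> Obj C" "z \<in> Obj C" for x y z
    using Al_iso[OF that] unfolding isomorphic_def by blast
  have "isomorphic C (T b a) (T (T b a) U)"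
    using Ru_iso[OF ba] isomorphic_sym unfolding isomorphic_def by blast
  also have "isomorphic C \<dots> (T (T b a) (T b d))"
    using isomorphic_T[OF isomorphic_refl[OF ba] isomorphic_sym[OF bd]] .
  also have "isomorphic C \<dots> (T (T (T b a) b) d)"
    using isomorphic_sym[OF assoc[OF ba b d]] .
  also have "isomorphic C \<dots> (T (T b (T a b)) d)"
    using isomorphic_T[OF assoc[OF b a b] isomorphic_refl[OF d]] .
  also have "isomorphic C \<dots> (T (T b U) d)"
    using isomorphic_T[OF isomorphic_T[OF isomorphic_refl[OF b] ab] isomorphic_refl[OF d]] .
  also have "isomorphic C \<dots> (T b d)"
    using isomorphic_T[OF _ isomorphic_refl[OF d]] Ru_iso[OF b] unfolding isomorphic_def by blast
  also note bd
  finally show ?thesis .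
qed

end

locale monoidal_category_with_functorial_inverses = monoidal_category +
  fixes io :: "'o \<Rightarrow> 'o" and im :: "'m \<Rightarrow> 'm" and \<eta> :: "'o \<Rightarrow> 'm"
  assumes endofunctor_io: "endofunctor C io im"
    and \<eta>_iso: "x \<in> Obj C \<Longrightarrow> iso_betw C (\<eta> x) (T x (io x)) U"
    and \<eta>_natural: "f \<in> hom C x x' \<Longrightarrow> Cmp C (\<eta> x') (Tm f (im f)) = Cmp C (Idm C U) (\<eta> x)"
begin

lemma io_Obj: "a \<in> Obj C \<Longrightarrow> io a \<in> Obj C"
  using endofunctor_Obj[OF endofunctor_io] .

lemma isomorphic_T_io: "a \<in> Obj C \<Longrightarrow> isomorphic C (T a (io a)) U"
  unfolding isomorphic_def using \<eta>_iso by blast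

lemma isomorphic_T_io_left: "a \<in> Obj C \<Longrightarrow> isomorphic C (T (io a) a) U"
  using isomorphic_tensor_unit_swap[OF _ io_Obj io_Obj[OF io_Obj] isomorphic_T_io isomorphic_T_io[OF io_Obj]] .

lemma fully_faithful_tensor_right: "a \<in> Obj C \<Longrightarrow> fully_faithful C (\<lambda>y. T y a) (\<lambda>g. Tm g (Idm C a))"
  using fully_faithful_tensor_right_if_inverse[OF _ io_Obj isomorphic_T_io isomorphic_T_io_left] .

lemma fully_faithful_tensor_left: "a \<in> Obj C \<Longrightarrow> fully_faithful C (\<lambda>y. T a y) (\<lambda>g. Tm (Idm C a) g)"
  using fully_faithful_tensor_left_if_inverse[OF _ io_Obj isomorphic_T_io isomorphic_T_io_left] .

text \<open>f \<otimes> im f is an isomorphism by naturality of \<eta>; it factors both as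
  (f \<otimes> 1) \<circ> (1 \<otimes> im f) and as (1 \<otimes> im f) \<circ> (f \<otimes> 1), so f \<otimes> 1 has a section and a
  retraction, which the fully faithful functors (-) \<otimes> io x' and (-) \<otimes> io x reflect to f.\<close>

lemma iso_betw_of_hom:
  assumes f: "f \<in> hom C x x'"
  shows "iso_betw C f x x'"
proof -
  have x: "x \<in> Obj C" and x': "x' \<in> Obj C" using hom_Obj[OF f] by auto
  have imf: "im f \<in> hom C (io x) (io x')" using endofunctor_hom[OF endofunctor_io f] .
  have "Cmp C (\<eta> x') (Tm f (im f)) = \<eta> x"
    using \<eta>_natural[OF f] id_left[OF iso_betw_hom[OF \<eta>_iso[OF x]]] by simp
  then have K: "iso_betw C (Tm f (im f)) (T x (io x)) (T x' (io x'))"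
    using iso_betw_comp_cancel_left[OF \<eta>_iso[OF x'] Tm_hom[OF f imf]] \<eta>_iso[OF x] by simp
  obtain s where s: "s \<in> hom C (T x' (io x')) (T x (io x'))"
    "Cmp C (Tm f (Idm C (io x'))) s = Idm C (T x' (io x'))"
    using iso_betw_comp_split(1)[OF K[unfolded Tm_as_comp_snd_first[OF f imf]]]
      Tm_hom[OF id_hom[OF x] imf] Tm_hom[OF f id_hom[OF io_Obj[OF x']]] by blast
  obtain r where r: "r \<in> hom C (T x' (io x)) (T x (io x))"
    "Cmp C r (Tm f (Idm C (io x))) = Idm C (T x (io x))"
    using iso_betw_comp_split(2)[OF K[unfolded Tm_as_comp_fst_first[OF f imf]]]
      Tm_hom[OF id_hom[OF x'] imf] Tm_hom[OF f id_hom[OF io_Obj[OF x]]] by blast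
  obtain f' where "f' \<in> hom C x' x" "Cmp C f f' = Idm C x'"
    using fully_faithful_reflects_section[OF endofunctor_tensor_right fully_faithful_tensor_right f s]
      io_Obj[OF x'] by blast
  moreover obtain f'' where "f'' \<in> hom C x' x" "Cmp C f'' f = Idm C x"
    using fully_faithful_reflects_retraction[OF endofunctor_tensor_right fully_faithful_tensor_right f r]
      io_Obj[OF x] by blast
  ultimately show ?thesis using iso_betw_if_section_retraction[OF f] by blast
qed

lemma bij_betw_Tm_right:
  assumes f: "f \<in> hom C x x'" and y: "y \<in> Obj C" and z: "z \<in> Obj C"
  shows "bij_betw (\<lambda>g. Tm g f) (hom C y z) (hom C (T y x) (T z x'))"
proof -
  have x: "x \<in> Obj C" using hom_Obj[OF f] by simp
  have "bij_betw (\<lambda>g. Tm g (Idm C x)) (hom C y z) (hom C (T y x) (T z x))"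
    using fully_faithful_tensor_right[OF x] y z by (simp add: fully_faithful_def)
  moreover have "bij_betw (Cmp C (Tm (Idm C z) f)) (hom C (T y x) (T z x)) (hom C (T y x) (T z x'))"
    using iso_betw_Tm[OF iso_betw_id[OF z] iso_betw_of_hom[OF f]] by (rule bij_betw_postcomp_iso)
  ultimately have "bij_betw (Cmp C (Tm (Idm C z) f) \<circ> (\<lambda>g. Tm g (Idm C x)))
      (hom C y z) (hom C (T y x) (T z x'))"
    by (rule bij_betw_trans)
  moreover have "bij_betw (\<lambda>g. Tm g f) (hom C y z) (hom C (T y x) (T z x')) =
      bij_betw (\<lambda>g. Cmp C (Tm (Idm C z) f) (Tm g (Idm C x))) (hom C y z) (hom C (T y x) (T z x'))"
    by (rule bij_betw_cong) (rule Tm_as_comp_fst_first[OF _ f])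
  ultimately show ?thesis by (simp add: comp_def)
qed

lemma bij_betw_Tm_left:
  assumes f: "f \<in> hom C x x'" and y: "y \<in> Obj C" and z: "z \<in> Obj C"
  shows "bij_betw (\<lambda>g. Tm f g) (hom C y z) (hom C (T x y) (T x' z))"
proof -
  have x: "x \<in> Obj C" using hom_Obj[OF f] by simp
  have "bij_betw (\<lambda>g. Tm (Idm C x) g) (hom C y z) (hom C (T x y) (T x z))"
    using fully_faithful_tensor_left[OF x] y z by (simp add: fully_faithful_def)
  moreover have "bij_betw (Cmp C (Tm f (Idm C z))) (hom C (T x y) (T x z)) (hom C (T x y) (T x' z))"
    using iso_betw_Tm[OF iso_betw_of_hom[OF f] iso_betw_id[OF z]] by (rule bij_betw_postcomp_iso)
  ultimately have "bij_betw (Cmp C (Tm f (Idm C z)) \<circ> (\<lambda>g. Tm (Idm C x) g))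
      (hom C y z) (hom C (T x y) (T x' z))"
    by (rule bij_betw_trans)
  moreover have "bij_betw (\<lambda>g. Tm f g) (hom C y z) (hom C (T x y) (T x' z)) =
      bij_betw (\<lambda>g. Cmp C (Tm f (Idm C z)) (Tm (Idm C x) g)) (hom C y z) (hom C (T x y) (T x' z))"
    by (rule bij_betw_cong) (rule Tm_as_comp_snd_first[OF f])
  ultimately show ?thesis by (simp add: comp_def)
qed

end

theorem lemma3p14:
  fixes C :: "('o, 'm, 'x) category_scheme"
    and T :: "'o \<Rightarrow> 'o \<Rightarrow> 'o" and Tm :: "'m \<Rightarrow> 'm \<Rightarrow> 'm" and U :: 'o
    and Al :: "'o \<Rightarrow> 'o \<Rightarrow> 'o \<Rightarrow> 'm" and Lu Ru :: "'o \<Rightarrow> 'm"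
    and f :: 'm and x x' :: 'o
  assumes "monoidal_category C T Tm U Al Lu Ru"
    and "admits_functorial_inverses C T Tm U"
    and "f \<in> hom C x x'"
  shows "\<forall>y \<in> Obj C. \<forall>z \<in> Obj C.
           bij_betw (\<lambda>g. Tm g f) (hom C y z) (hom C (T y x) (T z x')) \<and>
           bij_betw (\<lambda>g. Tm f g) (hom C y z) (hom C (T x y) (T x' z))"
proof -
  obtain io im \<eta> where "endofunctor C io im"
    and "\<forall>x \<in> Obj C. iso_betw C (\<eta> x) (T x (io x)) U"
    and "\<forall>x x' f. f \<in> hom C x x' \<longrightarrow> Cmp C (\<eta> x') (Tm f (im f)) = Cmp C (Idm C U) (\<eta> x)"
    using assms(2) unfolding admits_functorial_inverses_def by blast
  with assms(1) interpret monoidal_category_with_functorial_inverses C T Tm U Al Lu Ru io im \<eta>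
    unfolding monoidal_category_with_functorial_inverses_def
      monoidal_category_with_functorial_inverses_axioms_def by blast
  show ?thesis using bij_betw_Tm_right[OF assms(3)] bij_betw_Tm_left[OF assms(3)] by blast
qed

end
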